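(* There exists a two-way optical interference automaton (2OIA) that recognizes the language $\{a^nb^{2^n}\mid n\in\mathbb{N}\}$ in time $O(2^n)$ on inputs of the form $a^nb^m$.
   Context: A two-way optical interference automaton (2OIA) is a deterministic machine with finite state set $Q$, start state $q_0$, accepting and rejecting states, finite input alphabet $\Sigma$, and tape alphabet $\Gamma=\Sigma\cup\{\text{¢},\$\}$. On input $w=w_1\cdots w_N$ the read-only tape holds ¢$w_1\cdots w_N\$$ in cells $0,1,\dots,N+1$, scanned by a two-way head. For each cell $m$ there is a monochromatic point light source at the point $(m,0)$ of the plane; all sources have the same wavelength $\lambda$ and the same initial amplitude $A_0$, and each source is at any moment either switched off or switched on with initial phase $0$ or $\pi$. A detector is located at a grid point $(j,k)$ with $j,k\in\{0,\tfrac12,1,\tfrac32,\dots,N+1\}$, pointing towards the source array; its field of vision is the cone making angle $\pi/4$ with the vertical line through it, so it sees exactly the sources at $(m,0)$ with $|m-j|\le k$. The resultant wave at the detector is $\sum A_0 r_m^{-1}e^{i(\phi_m+2\pi r_m/\lambda)}$, summed over the switched-on sources it sees, where $r_m$ is the distance from the source to the detector and $\phi_m\in\{0,\pi\}$ the source's phase; the detector outputs $\underline{1}$ if this resultant is nonzero and $\underline{0}$ otherwise. The transition function $\delta:Q\times\Gamma\times\{\underline0,\underline1\}\to Q\times\{\text{left},\text{right},\text{stay}\}\times\{\text{left},\text{right},\text{up},\text{down},\text{stay}\}\times\{\mathrm{toggle}(0),\mathrm{toggle}(\pi),-\}$ maps (state, scanned symbol, detector output) to a new state, a move of the head by one cell,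 a move of the detector by one grid step (of length $1/2$), and an action on the source of the currently scanned cell: $\mathrm{toggle}(\phi)$ switches it on with phase $\phi$ if it is off and switches it off if it is on; $-$ does nothing. Initially all sources are off, the machine is in $q_0$, the head is on cell $0$, and the detector is at a prescribed initial grid position. For a given source, a maximal sequence of toggles at consecutive time steps is called non-transient if its length is odd; there is a constant $k$ such that the machine crashes if it attempts a non-transient toggle sequence on a single source for the $(k+1)$-th time. The machine accepts when it is in an accepting state with detector output $\underline0$. Its running time is the total number of moves made by the head plus the number of moves made by the detector. A 2OIA recognizes a language $L$ if it accepts every input in $L$ and rejects every input not in $L$. *)

theory Defs
  imports Complex_Main
begin

text \<open>Grid coordinates of the detector are stored in half units: the natural
  numbers J, K stand for the point (J/2, K/2).  Cells of the tape are
  0, ..., N+1 where N is the input length.\<close>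

datatype 'a tsym = Cent | Dollar | Sym 'a

datatype phase = Ph0 | PhPi

definition phase_val :: "phase \<Rightarrow> real" where
  "phase_val p = (case p of Ph0 \<Rightarrow> 0 | PhPi \<Rightarrow> pi)"

datatype hmove = HL | HR | HS
datatype dmove = DL | DR | DU | DD | DS
datatype action = Toggle phase | NoAct

text \<open>A machine: finite state set Q (states are natural numbers), start state,
  accepting and rejecting states, transition function (state, scanned symbol,
  detector output) to (state, head move, detector move, action on the scanned
  source), initial detector position (in half units), the crash constant,
  the wavelength and the common initial amplitude.\<close>
record 'a oia =
  Q :: "nat set"
  q0 :: nat
  Acc :: "nat set"
  Rej :: "nat set"
  delta :: "nat \<Rightarrow> 'a tsym \<Rightarrow> bool \<Rightarrow> nat \<times> hmove \<times> dmove \<times> action"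
  j0 :: nat
  k0 :: nat
  Kcrash :: nat
  wl :: real
  amp :: real

definition wf_oia :: "'a oia \<Rightarrow> bool" where
  "wf_oia M \<longleftrightarrow> finite (Q M) \<and> q0 M \<in> Q M \<and> Acc M \<subseteq> Q M \<and> Rej M \<subseteq> Q M
     \<and> Acc M \<inter> Rej M = {}
     \<and> (\<forall>q\<in>Q M. \<forall>s b. fst (delta M q s b) \<in> Q M)
     \<and> wl M > 0 \<and> amp M > 0"

text \<open>Configurations.  \<open>src\<close>: state of each source (None = off, Some p = on
  with phase p); \<open>cnt\<close>: number of completed non-transient toggle sequences
  per source; \<open>run\<close>: the source toggled at the previous step together with the
  length of the current maximal sequence of consecutive toggles;
  \<open>moves\<close>: number of head moves plus detector moves made so far.\<close>
record conf =
  st :: nat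
  hd :: nat
  dj :: nat
  dk :: nat
  src :: "nat \<Rightarrow> phase option"
  cnt :: "nat \<Rightarrow> nat"
  run :: "(nat \<times> nat) option"
  moves :: nat
  crashed :: bool

definition tape :: "'a list \<Rightarrow> nat \<Rightarrow> 'a tsym" where
  "tape w i = (if i = 0 then Cent else if i \<le> length w then Sym (w ! (i - 1)) else Dollar)"

definition dist_src :: "nat \<Rightarrow> nat \<Rightarrow> nat \<Rightarrow> real" where
  "dist_src m J K = sqrt ((real m - real J / 2)^2 + (real K / 2)^2)"

definition visible :: "nat \<Rightarrow> nat \<Rightarrow> nat \<Rightarrow> bool" where
  "visible m J K \<longleftrightarrow> \<bar>real m - real J / 2\<bar> \<le> real K / 2"

definition on_visible :: "'a list \<Rightarrow> conf \<Rightarrow> nat set" where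
  "on_visible w c = {m. m \<le> length w + 1 \<and> visible m (dj c) (dk c) \<and> src c m \<noteq> None}"

definition resultant :: "'a oia \<Rightarrow> 'a list \<Rightarrow> conf \<Rightarrow> complex" where
  "resultant M w c = (\<Sum>m\<in>on_visible w c.
      complex_of_real (amp M / dist_src m (dj c) (dk c))
      * cis (phase_val (the (src c m)) + 2 * pi * dist_src m (dj c) (dk c) / wl M))"

text \<open>Detector output (True = \<open>1\<close>, False = \<open>0\<close>).  A switched-on source located at
  the detector itself produces an unbounded (hence nonzero) field.\<close>
definition out :: "'a oia \<Rightarrow> 'a list \<Rightarrow> conf \<Rightarrow> bool" where
  "out M w c \<longleftrightarrow> (\<exists>m\<in>on_visible w c. dist_src m (dj c) (dk c) = 0) \<or> resultant M w c \<noteq> 0"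

definition close_run :: "(nat \<Rightarrow> nat) \<Rightarrow> (nat \<times> nat) option \<Rightarrow> (nat \<Rightarrow> nat)" where
  "close_run f r = (case r of None \<Rightarrow> f
     | Some (s, l) \<Rightarrow> if odd l then f(s := f s + 1) else f)"

definition halting :: "'a oia \<Rightarrow> conf \<Rightarrow> bool" where
  "halting M c \<longleftrightarrow> crashed c \<or> st c \<in> Acc M \<or> st c \<in> Rej M"

definition hmove_to :: "nat \<Rightarrow> hmove \<Rightarrow> nat \<Rightarrow> nat option" where
  "hmove_to B mv h = (case mv of
      HL \<Rightarrow> if h = 0 then None else Some (h - 1)
    | HR \<Rightarrow> if h \<ge> B then None else Some (h + 1)
    | HS \<Rightarrow> Some h)"

definition dmove_to :: "nat \<Rightarrow> dmove \<Rightarrow> nat \<times> nat \<Rightarrow> (nat \<times> nat) option" where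
  "dmove_to B mv p = (case p of (j, k) \<Rightarrow> (case mv of
      DL \<Rightarrow> if j = 0 then None else Some (j - 1, k)
    | DR \<Rightarrow> if j \<ge> B then None else Some (j + 1, k)
    | DD \<Rightarrow> if k = 0 then None else Some (j, k - 1)
    | DU \<Rightarrow> if k \<ge> B then None else Some (j, k + 1)
    | DS \<Rightarrow> Some (j, k)))"

definition step :: "'a oia \<Rightarrow> 'a list \<Rightarrow> conf \<Rightarrow> conf" where
  "step M w c = (
     let N = length w;
         (q', hm, dm, a) = delta M (st c) (tape w (hd c)) (out M w c);
         s = hd c;
         (src', run', cnt') = (case a of
             NoAct \<Rightarrow> (src c, None, close_run (cnt c) (run c))
           | Toggle ph \<Rightarrow>
               ((src c)(s := (if src c s = None then Some ph else None)),
                (case run c of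
                   None \<Rightarrow> (Some (s, 1), cnt c)
                 | Some (s0, l) \<Rightarrow> if s0 = s then (Some (s, l + 1), cnt c)
                                   else (Some (s, 1), close_run (cnt c) (run c)))));
         (run'', cnt'') = (if q' \<in> Acc M \<or> q' \<in> Rej M
                           then (None, close_run cnt' run') else (run', cnt'))
     in case (hmove_to (N + 1) hm (hd c), dmove_to (2 * (N + 1)) dm (dj c, dk c)) of
          (Some h', Some (j', k')) \<Rightarrow>
             c\<lparr> st := q', hd := h', dj := j', dk := k', src := src', cnt := cnt'',
                run := run'',
                moves := moves c + (if hm = HS then 0 else 1) + (if dm = DS then 0 else 1),
                crashed := (\<exists>x. cnt'' x > Kcrash M) \<rparr>
        | _ \<Rightarrow> c\<lparr> crashed := True \<rparr>)"

definition init :: "'a oia \<Rightarrow> 'a list \<Rightarrow> conf" where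
  "init M w = \<lparr> st = q0 M, hd = 0, dj = j0 M, dk = k0 M, src = (\<lambda>_. None),
     cnt = (\<lambda>_. 0), run = None, moves = 0,
     crashed = (j0 M > 2 * (length w + 1) \<or> k0 M > 2 * (length w + 1)) \<rparr>"

fun exec :: "'a oia \<Rightarrow> 'a list \<Rightarrow> nat \<Rightarrow> conf" where
  "exec M w 0 = init M w"
| "exec M w (Suc t) = (let c = exec M w t in if halting M c then c else step M w c)"

definition accepting_conf :: "'a oia \<Rightarrow> 'a list \<Rightarrow> conf \<Rightarrow> bool" where
  "accepting_conf M w c \<longleftrightarrow> \<not> crashed c \<and> st c \<in> Acc M \<and> \<not> out M w c"

definition accepts :: "'a oia \<Rightarrow> 'a list \<Rightarrow> bool" where
  "accepts M w \<longleftrightarrow> (\<exists>t. halting M (exec M w t) \<and> accepting_conf M w (exec M w t))"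

definition rejects :: "'a oia \<Rightarrow> 'a list \<Rightarrow> bool" where
  "rejects M w \<longleftrightarrow> (\<exists>t. halting M (exec M w t) \<and> \<not> accepting_conf M w (exec M w t))"

definition recognizes :: "'a oia \<Rightarrow> 'a list set \<Rightarrow> bool" where
  "recognizes M L \<longleftrightarrow> (\<forall>w. (w \<in> L \<longrightarrow> accepts M w) \<and> (w \<notin> L \<longrightarrow> rejects M w))"

definition runs_within :: "'a oia \<Rightarrow> 'a list \<Rightarrow> nat \<Rightarrow> bool" where
  "runs_within M w T \<longleftrightarrow> (\<exists>t. halting M (exec M w t) \<and> moves (exec M w t) \<le> T)"

datatype ab = La | Lb

end

(* The sources are used as a mark on each tape cell that can be set once and erased once (the
  crash constant is 2), and a detector kept on the axis sees only the source directly below it,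
  so it acts as a second head reading these marks.  After round i the last i cells of the
  a-block are marked as a unary counter, and so are the b-cells at distance 2^(i-1) and 2^i
  behind the a-block.  A round erases the mark at distance g = 2^(i-1) and then moves the head
  three cells for every cell the detector advances; when the detector meets the mark at
  distance 2g = 2^i the head is at distance g + 3g = 2^(i+1), where it sets the next mark.
  After n rounds the input is accepted iff the b-block ends exactly at distance 2^n.  Round i
  costs O(2^i) moves and never looks beyond distance 2^(i+1), so the running time is O(2^n)
  however long the b-block is. *)

theory Submission
  imports Defs
begin

section \<open>Runs of a 2OIA\<close>

lemma out_on_axis:
  assumes "dk c = 0"
  shows "out M w c \<longleftrightarrow> even (dj c) \<and> dj c div 2 \<le> length w + 1 \<and> src c (dj c div 2) \<noteq> None"
proof -
  have visible: "visible m (dj c) 0 \<longleftrightarrow> dj c = 2 * m" for m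
    unfolding visible_def by auto
  have on_visible: "on_visible w c = {m. m \<le> length w + 1 \<and> dj c = 2 * m \<and> src c m \<noteq> None}"
    unfolding on_visible_def using visible assms by auto
  show ?thesis
  proof (cases "even (dj c) \<and> dj c div 2 \<le> length w + 1 \<and> src c (dj c div 2) \<noteq> None")
    case True
    then have "dj c div 2 \<in> on_visible w c" unfolding on_visible by auto
    moreover have "dist_src (dj c div 2) (dj c) (dk c) = 0"
      using True assms unfolding dist_src_def by (auto elim!: evenE)
    ultimately show ?thesis using True unfolding out_def by blast
  next
    case False
    then have "on_visible w c = {}" unfolding on_visible by auto
    then show ?thesis using False unfolding out_def resultant_def by simp
  qed
qed

definition next_conf :: "'a oia \<Rightarrow> 'a list \<Rightarrow> conf \<Rightarrow> conf" where
  "next_conf M w c = (if halting M c then c else step M w c)"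

lemma exec_eq_funpow: "exec M w t = (next_conf M w ^^ t) (init M w)"
  by (induction t) (simp_all add: next_conf_def Let_def)

definition reaches :: "'a oia \<Rightarrow> 'a list \<Rightarrow> conf \<Rightarrow> conf \<Rightarrow> bool" where
  "reaches M w c c' \<longleftrightarrow> (\<exists>t. (next_conf M w ^^ t) c = c')"

lemma reaches_refl: "reaches M w c c"
  unfolding reaches_def by (rule exI[of _ 0]) simp

lemma reaches_trans: "reaches M w c1 c2 \<Longrightarrow> reaches M w c2 c3 \<Longrightarrow> reaches M w c1 c3"
  unfolding reaches_def by (metis funpow_add comp_apply)

lemma reaches_step: "\<not> halting M c \<Longrightarrow> reaches M w (step M w c) c' \<Longrightarrow> reaches M w c c'"
  unfolding reaches_def by (metis funpow_Suc_right comp_apply next_conf_def)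

definition halts_within :: "'a oia \<Rightarrow> 'a list \<Rightarrow> conf \<Rightarrow> bool \<Rightarrow> nat \<Rightarrow> bool" where
  "halts_within M w c v T \<longleftrightarrow>
     (\<exists>c'. reaches M w c c' \<and> halting M c' \<and> accepting_conf M w c' = v \<and> moves c' \<le> T)"

lemma halts_within_reaches: "reaches M w c c1 \<Longrightarrow> halts_within M w c1 v T \<Longrightarrow> halts_within M w c v T"
  unfolding halts_within_def using reaches_trans by blast

lemma halts_within_mono: "halts_within M w c v T \<Longrightarrow> T \<le> T' \<Longrightarrow> halts_within M w c v T'"
  unfolding halts_within_def using le_trans by blast

lemma halts_within_halting:
  "reaches M w c c' \<Longrightarrow> halting M c' \<Longrightarrow> accepting_conf M w c' = v \<Longrightarrow> moves c' \<le> T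
    \<Longrightarrow> halts_within M w c v T"
  unfolding halts_within_def by blast

lemma halts_within_init_runs_within: "halts_within M w (init M w) v T \<Longrightarrow> runs_within M w T"
  unfolding halts_within_def runs_within_def reaches_def exec_eq_funpow by blast

lemma recognizes_if_halts_within:
  assumes "\<And>w. \<exists>T. halts_within M w (init M w) (w \<in> L) T"
  shows "recognizes M L"
  unfolding recognizes_def accepts_def rejects_def
  using assms unfolding halts_within_def reaches_def exec_eq_funpow by metis

section \<open>The machine\<close>

(* States: 0, 1 step onto the first letter, 3 handles an input starting with b; 2, 4-9 set up round 1
  (marks on the last a and on the first two b's, detector moved onto the last a); 10-18, 22 form
  a round; 19-21, 23, 26 are the final check; 24 accepts and 25 rejects. *)
definition pow2_delta :: "nat \<Rightarrow> ab tsym \<Rightarrow> bool \<Rightarrow> nat \<times> hmove \<times> dmove \<times> action" where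
  "pow2_delta q s ob = (let R = (25, HS, DS, NoAct) in
     if q = 0 then (1, HR, DS, NoAct)
     else if q = 1 then (if s = Sym La then (2, HR, DS, NoAct) else if s = Sym Lb then (3, HR, DS, NoAct) else R)
     else if q = 2 then (if s = Sym La then (2, HR, DS, NoAct) else if s = Sym Lb then (4, HR, DS, Toggle Ph0) else R)
     else if q = 3 then (if s = Dollar then (24, HS, DS, NoAct) else R)
     else if q = 4 then (if s = Sym Lb then (5, HS, DS, NoAct) else R)
     else if q = 5 then (6, HL, DS, Toggle Ph0)
     else if q = 6 then (7, HL, DS, NoAct)
     else if q = 7 then (8, HS, DR, Toggle Ph0)
     else if q = 8 then (9, HS, DR, NoAct)
     else if q = 9 then (if ob then (10, HS, DS, NoAct) else (8, HS, DR, NoAct))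
     else if q = 10 then (if ob then (11, HL, DL, NoAct) else if s = Cent then (19, HR, DR, NoAct)
                          else if s = Sym La then (12, HR, DR, Toggle Ph0) else R)
     else if q = 11 then (10, HS, DL, NoAct)
     else if q = 12 then (13, HS, DR, NoAct)
     else if q = 13 then (if s = Sym La then (12, HR, DR, NoAct)
                          else if s = Sym Lb then (if ob then (14, HR, DR, Toggle Ph0) else (12, HR, DR, NoAct)) else R)
     else if q = 14 then (if s = Sym Lb then (15, HR, DR, NoAct) else R)
     else if q = 15 then (if s = Sym Lb then (16, HR, DS, NoAct) else R)
     else if q = 16 then (if s = Sym Lb then (if ob then (17, HL, DS, Toggle Ph0) else (14, HR, DR, NoAct)) else R)
     else if q = 17 then (if s = Sym Lb then (17, HL, DS, NoAct) else if s = Sym La then (18, HS, DL, NoAct) else R)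
     else if q = 18 then (22, HS, DL, NoAct)
     else if q = 22 then (if ob then (10, HS, DS, NoAct) else (18, HS, DL, NoAct))
     else if q = 19 then (20, HS, DR, NoAct)
     else if q = 20 then (if s = Sym La then (19, HR, DR, NoAct)
                          else if s = Sym Lb then (if ob then (21, HR, DR, NoAct) else (19, HR, DR, NoAct)) else R)
     else if q = 21 then (23, HS, DR, NoAct)
     else if q = 23 then (if s = Sym Lb then (if ob then (26, HR, DR, NoAct) else (21, HR, DR, NoAct)) else R)
     else if q = 26 then (if s = Dollar then (24, HS, DS, NoAct) else R)
     else R)"

definition pow2_oia :: "ab oia" where
  "pow2_oia = \<lparr>Q = {..26}, q0 = 0, Acc = {24}, Rej = {25}, delta = pow2_delta, j0 = 0, k0 = 0,
     Kcrash = 2, wl = 1, amp = 1\<rparr>"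

lemma wf_pow2_oia: "wf_oia pow2_oia"
  unfolding wf_oia_def pow2_oia_def by (auto simp: pow2_delta_def Let_def)

definition sources_on :: "nat set \<Rightarrow> nat \<Rightarrow> phase option" where
  "sources_on S x = (if x \<in> S then Some Ph0 else None)"

definition toggle_count :: "nat set \<Rightarrow> nat set \<Rightarrow> nat \<Rightarrow> nat" where
  "toggle_count C D x = (if x \<in> D then 2 else if x \<in> C then 1 else 0)"

(* The detector never leaves the axis; j is its position in half units.  S is the set of marked
  cells, C and D are the cells toggled once resp. twice, r is the pending toggle run. *)
definition axis_conf ::
    "nat \<Rightarrow> nat \<Rightarrow> nat \<Rightarrow> nat set \<Rightarrow> nat set \<Rightarrow> nat set \<Rightarrow> (nat \<times> nat) option \<Rightarrow> nat \<Rightarrow> conf" where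
  "axis_conf q h j S C D r mv = \<lparr>st = q, hd = h, dj = j, dk = 0, src = sources_on S,
     cnt = toggle_count C D, run = r, moves = mv, crashed = False\<rparr>"

lemma axis_conf_sel [simp]: "moves (axis_conf q h j S C D r mv) = mv" "st (axis_conf q h j S C D r mv) = q"
  by (simp_all add: axis_conf_def)

lemma init_pow2_oia: "init pow2_oia w = axis_conf 0 0 0 {} {} {} None 0"
  by (simp add: init_def pow2_oia_def axis_conf_def sources_on_def toggle_count_def fun_eq_iff)

lemma halting_axis_conf: "halting pow2_oia (axis_conf q h j S C D r mv) \<longleftrightarrow> q = 24 \<or> q = 25"
  by (simp add: halting_def axis_conf_def pow2_oia_def)

lemma out_axis_conf:
  "out pow2_oia w (axis_conf q h j S C D r mv) \<longleftrightarrow> even j \<and> j div 2 \<le> length w + 1 \<and> j div 2 \<in> S"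
  by (subst out_on_axis) (auto simp: axis_conf_def sources_on_def)

lemma accepting_axis_conf:
  assumes "odd j \<or> j = 0 \<and> 0 \<notin> S"
  shows "accepting_conf pow2_oia w (axis_conf 24 h j S C D None mv)"
  using assms unfolding accepting_conf_def out_axis_conf
  by (auto simp: pow2_oia_def axis_conf_def)

definition head_pos :: "hmove \<Rightarrow> nat \<Rightarrow> nat" where
  "head_pos hm h = (case hm of HL \<Rightarrow> h - 1 | HR \<Rightarrow> h + 1 | HS \<Rightarrow> h)"

definition head_ok :: "nat \<Rightarrow> hmove \<Rightarrow> nat \<Rightarrow> bool" where
  "head_ok B hm h = (case hm of HL \<Rightarrow> 0 < h | HR \<Rightarrow> h < B | HS \<Rightarrow> True)"

definition det_pos :: "dmove \<Rightarrow> nat \<Rightarrow> nat" where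
  "det_pos dm j = (case dm of DL \<Rightarrow> j - 1 | DR \<Rightarrow> j + 1 | _ \<Rightarrow> j)"

definition det_ok :: "nat \<Rightarrow> dmove \<Rightarrow> nat \<Rightarrow> bool" where
  "det_ok B dm j = (case dm of DL \<Rightarrow> 0 < j | DR \<Rightarrow> j < B | DS \<Rightarrow> True | _ \<Rightarrow> False)"

definition move_cost :: "hmove \<Rightarrow> dmove \<Rightarrow> nat" where
  "move_cost hm dm = (if hm = HS then 0 else 1) + (if dm = DS then 0 else 1)"

lemma hmove_to_head_pos: "head_ok B hm h \<Longrightarrow> hmove_to B hm h = Some (head_pos hm h)"
  by (cases hm) (auto simp: head_ok_def hmove_to_def head_pos_def)

lemma dmove_to_det_pos: "det_ok B dm j \<Longrightarrow> dmove_to B dm (j, 0) = Some (det_pos dm j, 0)"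
  by (cases dm) (auto simp: det_ok_def dmove_to_def det_pos_def)

lemma move_simps [simp]:
  "head_pos HL h = h - 1" "head_pos HR h = Suc h" "head_pos HS h = h"
  "det_pos DL j = j - 1" "det_pos DR j = Suc j" "det_pos DS j = j"
  "head_ok B HL h = (0 < h)" "head_ok B HR h = (h < B)" "head_ok B HS h = True"
  "det_ok B DL j = (0 < j)" "det_ok B DR j = (j < B)" "det_ok B DS j = True"
  "move_cost HL DL = 2" "move_cost HL DR = 2" "move_cost HR DL = 2" "move_cost HR DR = 2"
  "move_cost HS DL = 1" "move_cost HS DR = 1" "move_cost HL DS = 1" "move_cost HR DS = 1"
  "move_cost HS DS = 0"
  by (simp_all add: head_pos_def det_pos_def head_ok_def det_ok_def move_cost_def)

lemma toggle_count_le: "\<not> (\<exists>x. 2 < toggle_count C D x)"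
  by (simp add: toggle_count_def)

lemmas pow2_delta_simps = pow2_delta_def out_axis_conf

lemma step_plain:
  assumes "pow2_delta q (tape w h) (out pow2_oia w (axis_conf q h j S C D None mv)) = (q', hm, dm, NoAct)"
    "hmove_to (length w + 1) hm h = Some h'" "dmove_to (2 * (length w + 1)) dm (j, 0) = Some (j', 0)"
  shows "step pow2_oia w (axis_conf q h j S C D None mv) = axis_conf q' h' j' S C D None (mv + move_cost hm dm)"
  using assms unfolding step_def
  by (simp add: axis_conf_def pow2_oia_def Let_def close_run_def toggle_count_le move_cost_def)

lemma step_toggle:
  assumes "pow2_delta q (tape w h) (out pow2_oia w (axis_conf q h j S C D None mv)) = (q', hm, dm, Toggle Ph0)"
    "hmove_to (length w + 1) hm h = Some h'" "dmove_to (2 * (length w + 1)) dm (j, 0) = Some (j', 0)"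
    "q' \<noteq> 24" "q' \<noteq> 25" "S' = (if h \<in> S then S - {h} else insert h S)"
  shows "step pow2_oia w (axis_conf q h j S C D None mv)
    = axis_conf q' h' j' S' C D (Some (h, 1)) (mv + move_cost hm dm)"
  using assms unfolding step_def
  by (auto simp add: axis_conf_def pow2_oia_def Let_def close_run_def toggle_count_le move_cost_def
      sources_on_def fun_eq_iff)

lemma step_close:
  assumes "pow2_delta q (tape w h) (out pow2_oia w (axis_conf q h j S C D (Some (s, 1)) mv)) = (q', hm, dm, NoAct)"
    "hmove_to (length w + 1) hm h = Some h'" "dmove_to (2 * (length w + 1)) dm (j, 0) = Some (j', 0)"
    "(toggle_count C D)(s := Suc (toggle_count C D s)) = toggle_count C' D'"
  shows "step pow2_oia w (axis_conf q h j S C D (Some (s, 1)) mv)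
    = axis_conf q' h' j' S C' D' None (mv + move_cost hm dm)"
  using assms unfolding step_def
  by (simp add: axis_conf_def pow2_oia_def Let_def close_run_def toggle_count_le move_cost_def)

lemma reaches_plain_step:
  assumes "pow2_delta q (tape w h) (out pow2_oia w (axis_conf q h j S C D None mv)) = (q', hm, dm, NoAct)"
    "head_ok (length w + 1) hm h \<and> det_ok (2 * (length w + 1)) dm j \<and> q \<noteq> 24 \<and> q \<noteq> 25"
    "reaches pow2_oia w (axis_conf q' (head_pos hm h) (det_pos dm j) S C D None (mv + move_cost hm dm)) c'"
  shows "reaches pow2_oia w (axis_conf q h j S C D None mv) c'"
proof -
  have "step pow2_oia w (axis_conf q h j S C D None mv)
      = axis_conf q' (head_pos hm h) (det_pos dm j) S C D None (mv + move_cost hm dm)"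
    using assms(2) by (intro step_plain[OF assms(1)] hmove_to_head_pos dmove_to_det_pos) auto
  then show ?thesis
    using assms(2,3) reaches_step[of pow2_oia "axis_conf q h j S C D None mv"]
    by (simp add: halting_axis_conf)
qed

lemma reaches_toggle_step:
  assumes "pow2_delta q (tape w h) (out pow2_oia w (axis_conf q h j S C D None mv)) = (q', hm, dm, Toggle Ph0)"
    "head_ok (length w + 1) hm h \<and> det_ok (2 * (length w + 1)) dm j \<and> q \<noteq> 24 \<and> q \<noteq> 25
      \<and> q' \<noteq> 24 \<and> q' \<noteq> 25"
    "reaches pow2_oia w (axis_conf q' (head_pos hm h) (det_pos dm j) (if h \<in> S then S - {h} else insert h S)
       C D (Some (h, 1)) (mv + move_cost hm dm)) c'"
  shows "reaches pow2_oia w (axis_conf q h j S C D None mv) c'"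
proof -
  have "step pow2_oia w (axis_conf q h j S C D None mv)
      = axis_conf q' (head_pos hm h) (det_pos dm j) (if h \<in> S then S - {h} else insert h S)
          C D (Some (h, 1)) (mv + move_cost hm dm)"
    using assms(2) by (intro step_toggle[OF assms(1)] hmove_to_head_pos dmove_to_det_pos) auto
  then show ?thesis
    using assms(2,3) reaches_step[of pow2_oia "axis_conf q h j S C D None mv"]
    by (simp add: halting_axis_conf)
qed

lemma reaches_close_step:
  assumes "pow2_delta q (tape w h) (out pow2_oia w (axis_conf q h j S C D (Some (s, 1)) mv)) = (q', hm, dm, NoAct)"
    "head_ok (length w + 1) hm h \<and> det_ok (2 * (length w + 1)) dm j \<and> q \<noteq> 24 \<and> q \<noteq> 25"
    "(toggle_count C D)(s := Suc (toggle_count C D s)) = toggle_count C' D'"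
    "reaches pow2_oia w (axis_conf q' (head_pos hm h) (det_pos dm j) S C' D' None (mv + move_cost hm dm)) c'"
  shows "reaches pow2_oia w (axis_conf q h j S C D (Some (s, 1)) mv) c'"
proof -
  have "step pow2_oia w (axis_conf q h j S C D (Some (s, 1)) mv)
      = axis_conf q' (head_pos hm h) (det_pos dm j) S C' D' None (mv + move_cost hm dm)"
    using assms(2) by (intro step_close[OF assms(1) _ _ assms(3)] hmove_to_head_pos dmove_to_det_pos) auto
  then show ?thesis
    using assms(2,4) reaches_step[of pow2_oia "axis_conf q h j S C D (Some (s, 1)) mv"]
    by (simp add: halting_axis_conf)
qed

lemma reaches_close_first_toggle:
  assumes "pow2_delta q (tape w h) (out pow2_oia w (axis_conf q h j S C D (Some (s, 1)) mv)) = (q', hm, dm, NoAct)"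
    "head_ok (length w + 1) hm h \<and> det_ok (2 * (length w + 1)) dm j \<and> q \<noteq> 24 \<and> q \<noteq> 25
      \<and> s \<notin> C \<and> s \<notin> D"
    "reaches pow2_oia w (axis_conf q' (head_pos hm h) (det_pos dm j) S (insert s C) D None (mv + move_cost hm dm)) c'"
  shows "reaches pow2_oia w (axis_conf q h j S C D (Some (s, 1)) mv) c'"
proof (rule reaches_close_step[OF assms(1) _ _ assms(3)])
  show "(toggle_count C D)(s := Suc (toggle_count C D s)) = toggle_count (insert s C) D"
    using assms(2) by (auto simp: toggle_count_def fun_eq_iff)
qed (use assms(2) in simp)

lemma reaches_close_second_toggle:
  assumes "pow2_delta q (tape w h) (out pow2_oia w (axis_conf q h j S C D (Some (s, 1)) mv)) = (q', hm, dm, NoAct)"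
    "head_ok (length w + 1) hm h \<and> det_ok (2 * (length w + 1)) dm j \<and> q \<noteq> 24 \<and> q \<noteq> 25
      \<and> s \<in> C \<and> s \<notin> D"
    "reaches pow2_oia w (axis_conf q' (head_pos hm h) (det_pos dm j) S (C - {s}) (insert s D) None
       (mv + move_cost hm dm)) c'"
  shows "reaches pow2_oia w (axis_conf q h j S C D (Some (s, 1)) mv) c'"
proof (rule reaches_close_step[OF assms(1) _ _ assms(3)])
  show "(toggle_count C D)(s := Suc (toggle_count C D s)) = toggle_count (C - {s}) (insert s D)"
    using assms(2) by (auto simp: toggle_count_def fun_eq_iff)
qed (use assms(2) in simp)

lemma step_rejecting:
  assumes "pow2_delta (st c) (tape w (hd c)) (out pow2_oia w c) = (25, HS, DS, NoAct)"
  shows "halting pow2_oia (step pow2_oia w c) \<and> \<not> accepting_conf pow2_oia w (step pow2_oia w c)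
    \<and> moves (step pow2_oia w c) = moves c"
  using assms unfolding step_def
  by (simp add: pow2_oia_def Let_def halting_def accepting_conf_def hmove_to_def dmove_to_def)

lemma halts_within_reject_step:
  assumes "pow2_delta q (tape w h) (out pow2_oia w (axis_conf q h j S C D r mv)) = (25, HS, DS, NoAct)"
    "q \<noteq> 24 \<and> q \<noteq> 25 \<and> mv \<le> T"
  shows "halts_within pow2_oia w (axis_conf q h j S C D r mv) False T"
proof -
  let ?c = "axis_conf q h j S C D r mv"
  have "pow2_delta (st ?c) (tape w (hd ?c)) (out pow2_oia w ?c) = (25, HS, DS, NoAct)"
    using assms(1) by (simp add: axis_conf_def)
  note rejected = step_rejecting[OF this]
  have "\<not> halting pow2_oia ?c" using assms(2) by (simp add: halting_axis_conf)
  then have "reaches pow2_oia w ?c (step pow2_oia w ?c)" by (rule reaches_step[OF _ reaches_refl])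
  then show ?thesis unfolding halts_within_def using rejected assms(2) by auto
qed

lemma reaches_axis_conf_eq:
  "q = q' \<Longrightarrow> h = h' \<Longrightarrow> j = j' \<Longrightarrow> S = S' \<Longrightarrow> C = C' \<Longrightarrow> D = D' \<Longrightarrow> r = r' \<Longrightarrow> mv = mv'
    \<Longrightarrow> reaches M w (axis_conf q h j S C D r mv) (axis_conf q' h' j' S' C' D' r' mv')"
  by (simp add: reaches_refl)

lemmas halts_within_plain_step = halts_within_reaches[OF reaches_plain_step[OF _ _ reaches_refl]]
lemmas halts_within_toggle_step = halts_within_reaches[OF reaches_toggle_step[OF _ _ reaches_refl]]
lemmas halts_within_close_second_toggle =
  halts_within_reaches[OF reaches_close_second_toggle[OF _ _ reaches_refl]]

lemma tape_0 [simp]: "tape w 0 = Cent"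
  by (simp add: tape_def)

(* The loop lemmas take the final position and cost as equations, so that they apply by rule
  to goals whose arithmetic has not been normalized. *)
lemma loop_q2:
  assumes "\<And>x. p \<le> x \<Longrightarrow> x < p + t \<Longrightarrow> tape w x = Sym La" "p + t \<le> length w + 1"
    "p' = p + t" "mv' = mv + t"
  shows "reaches pow2_oia w (axis_conf 2 p 0 S C D None mv) (axis_conf 2 p' 0 S C D None mv')"
  using assms
proof (induction t arbitrary: p mv)
  case 0 then show ?case by (simp add: reaches_refl)
next
  case (Suc t)
  have "tape w p = Sym La" using Suc.prems by simp
  with Suc.prems show ?case
    apply -
    apply (rule reaches_plain_step, simp add: pow2_delta_simps, simp)
    apply (simp (no_asm) only: move_simps, rule Suc.IH; simp)
    done
qed

lemma loop_q9:
  assumes "\<And>x. d \<le> x \<Longrightarrow> x < d + t \<Longrightarrow> x \<notin> S" "d + t \<le> length w"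
    "j = 2 * d" "j' = 2 * (d + t)" "mv' = mv + 2 * t"
  shows "reaches pow2_oia w (axis_conf 9 h j S C D None mv) (axis_conf 9 h j' S C D None mv')"
  using assms
proof (induction t arbitrary: d j mv)
  case 0 then show ?case by (simp add: reaches_refl)
next
  case (Suc t)
  have "d \<notin> S" using Suc.prems by simp
  with Suc.prems show ?case
    apply -
    apply (rule reaches_plain_step, simp add: pow2_delta_simps, simp)
    apply (rule reaches_plain_step, simp add: pow2_delta_simps, simp)
    apply (simp (no_asm) only: move_simps, rule Suc.IH[of "Suc d"]; simp)
    done
qed

lemma loop_q10:
  assumes "\<And>x. b < x \<Longrightarrow> x \<le> b + t \<Longrightarrow> x \<in> S" "b + t \<le> length w"
    "h = b + t" "j = 2 * h" "j' = 2 * b" "mv' = mv + 3 * t"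
  shows "reaches pow2_oia w (axis_conf 10 h j S C D None mv) (axis_conf 10 b j' S C D None mv')"
  using assms
proof (induction t arbitrary: h j mv)
  case 0 then show ?case by (simp add: reaches_refl)
next
  case (Suc t)
  have "Suc (b + t) \<in> S" using Suc.prems by simp
  with Suc.prems show ?case
    apply -
    apply (rule reaches_plain_step, simp add: pow2_delta_simps, simp)
    apply (rule reaches_plain_step, simp add: pow2_delta_simps, simp)
    apply (simp (no_asm) only: move_simps, rule Suc.IH; simp)
    done
qed

lemma loop_q13:
  assumes "\<And>x. p \<le> x \<Longrightarrow> x < p + t \<Longrightarrow> tape w x = Sym La \<or> (tape w x = Sym Lb \<and> x \<notin> S)"
    "p + t \<le> length w" "j = 2 * p" "p' = p + t" "j' = 2 * p'" "mv' = mv + 3 * t"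
  shows "reaches pow2_oia w (axis_conf 13 p j S C D None mv) (axis_conf 13 p' j' S C D None mv')"
  using assms
proof (induction t arbitrary: p j mv)
  case 0 then show ?case by (simp add: reaches_refl)
next
  case (Suc t)
  have hp: "tape w p = Sym La \<or> (tape w p = Sym Lb \<and> p \<notin> S)" using Suc.prems by simp
  have e: "pow2_delta 13 (tape w p) (out pow2_oia w (axis_conf 13 p j S C D None mv)) = (12, HR, DR, NoAct)"
    using hp Suc.prems(2,3) by (auto simp: pow2_delta_simps)
  from Suc.prems show ?case
    apply -
    apply (rule reaches_plain_step[OF e], simp)
    apply (rule reaches_plain_step, simp add: pow2_delta_simps, simp)
    apply (simp (no_asm) only: move_simps, rule Suc.IH[of "Suc p"]; simp)
    done
qed

lemma loop_q20:
  assumes "\<And>x. p \<le> x \<Longrightarrow> x < p + t \<Longrightarrow> tape w x = Sym La \<or> (tape w x = Sym Lb \<and> x \<notin> S)"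
    "p + t \<le> length w" "j = 2 * p" "p' = p + t" "j' = 2 * p'" "mv' = mv + 3 * t"
  shows "reaches pow2_oia w (axis_conf 20 p j S C D None mv) (axis_conf 20 p' j' S C D None mv')"
  using assms
proof (induction t arbitrary: p j mv)
  case 0 then show ?case by (simp add: reaches_refl)
next
  case (Suc t)
  have hp: "tape w p = Sym La \<or> (tape w p = Sym Lb \<and> p \<notin> S)" using Suc.prems by simp
  have e: "pow2_delta 20 (tape w p) (out pow2_oia w (axis_conf 20 p j S C D None mv)) = (19, HR, DR, NoAct)"
    using hp Suc.prems(2,3) by (auto simp: pow2_delta_simps)
  from Suc.prems show ?case
    apply -
    apply (rule reaches_plain_step[OF e], simp)
    apply (rule reaches_plain_step, simp add: pow2_delta_simps, simp)
    apply (simp (no_asm) only: move_simps, rule Suc.IH[of "Suc p"]; simp)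
    done
qed

lemma loop_q23:
  assumes "\<And>x. p \<le> x \<Longrightarrow> x < p + t \<Longrightarrow> tape w x = Sym Lb \<and> x \<notin> S"
    "p + t \<le> length w" "j = 2 * p" "p' = p + t" "j' = 2 * p'" "mv' = mv + 3 * t"
  shows "reaches pow2_oia w (axis_conf 23 p j S C D None mv) (axis_conf 23 p' j' S C D None mv')"
  using assms
proof (induction t arbitrary: p j mv)
  case 0 then show ?case by (simp add: reaches_refl)
next
  case (Suc t)
  have "tape w p = Sym Lb \<and> p \<notin> S" using Suc.prems by simp
  with Suc.prems show ?case
    apply -
    apply (rule reaches_plain_step, simp add: pow2_delta_simps, simp)
    apply (rule reaches_plain_step, simp add: pow2_delta_simps, simp)
    apply (simp (no_asm) only: move_simps, rule Suc.IH[of "Suc p"]; simp)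
    done
qed

lemma loop_q16:
  assumes "\<And>x. d \<le> x \<Longrightarrow> x < d + t \<Longrightarrow> x \<notin> S" "\<And>x. h \<le> x \<Longrightarrow> x < h + 3 * t \<Longrightarrow> tape w x = Sym Lb"
    "h + 3 * t \<le> length w + 1" "d + t \<le> length w" "j = 2 * d" "h' = h + 3 * t" "j' = 2 * (d + t)"
    "mv' = mv + 5 * t"
  shows "reaches pow2_oia w (axis_conf 16 h j S C D None mv) (axis_conf 16 h' j' S C D None mv')"
  using assms
proof (induction t arbitrary: h d j mv)
  case 0 then show ?case by (simp add: reaches_refl)
next
  case (Suc t)
  have "d \<notin> S \<and> tape w h = Sym Lb \<and> tape w (Suc h) = Sym Lb \<and> tape w (Suc (Suc h)) = Sym Lb"
    using Suc.prems(1)[of d] Suc.prems(2)[of h] Suc.prems(2)[of "Suc h"] Suc.prems(2)[of "Suc (Suc h)"] by simp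
  with Suc.prems show ?case
    apply -
    apply (rule reaches_plain_step, simp add: pow2_delta_simps, simp)
    apply (rule reaches_plain_step, simp add: pow2_delta_simps, simp)
    apply (rule reaches_plain_step, simp add: pow2_delta_simps, simp)
    apply (simp (no_asm) only: move_simps, rule Suc.IH[where d="Suc d"])
    apply simp_all
    done
qed

lemma loop_q17:
  assumes "\<And>x. b < x \<Longrightarrow> x \<le> b + t \<Longrightarrow> tape w x = Sym Lb" "b + t \<le> length w"
    "h = b + t" "mv' = mv + t"
  shows "reaches pow2_oia w (axis_conf 17 h j S C D None mv) (axis_conf 17 b j S C D None mv')"
  using assms
proof (induction t arbitrary: h mv)
  case 0 then show ?case by (simp add: reaches_refl)
next
  case (Suc t)
  have "tape w (Suc (b + t)) = Sym Lb" using Suc.prems by simp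
  with Suc.prems show ?case
    apply -
    apply (rule reaches_plain_step, simp add: pow2_delta_simps, simp)
    apply (simp (no_asm) only: move_simps, rule Suc.IH; simp)
    done
qed

lemma loop_q22:
  assumes "\<And>x. b < x \<Longrightarrow> x \<le> b + t \<Longrightarrow> x \<notin> S" "b + t \<le> length w"
    "j = 2 * (b + t)" "j' = 2 * b" "mv' = mv + 2 * t"
  shows "reaches pow2_oia w (axis_conf 22 h j S C D None mv) (axis_conf 22 h j' S C D None mv')"
  using assms
proof (induction t arbitrary: j mv)
  case 0 then show ?case by (simp add: reaches_refl)
next
  case (Suc t)
  have "Suc (b + t) \<notin> S" using Suc.prems by simp
  with Suc.prems show ?case
    apply -
    apply (rule reaches_plain_step, simp add: pow2_delta_simps, simp)
    apply (rule reaches_plain_step, simp add: pow2_delta_simps, simp)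
    apply (simp (no_asm) only: move_simps, rule Suc.IH; simp)
    done
qed

lemma loop_q16_reject:
  assumes "\<And>x. d \<le> x \<Longrightarrow> x < d + t \<Longrightarrow> x \<notin> S" "\<And>x. h \<le> x \<Longrightarrow> x < s \<Longrightarrow> tape w x = Sym Lb"
    "tape w s \<noteq> Sym Lb" "h \<le> s" "s \<le> h + 3 * t" "s \<le> length w + 1" "d + 2 \<le> h" "j = 2 * d"
    "mv + 5 * t \<le> T"
  shows "halts_within pow2_oia w (axis_conf 16 h j S C D None mv) False T"
  using assms
proof (induction t arbitrary: h d j mv)
  case 0
  then have "s = h" by simp
  with 0 show ?case by (intro halts_within_reject_step) (simp_all add: pow2_delta_simps)
next
  case (Suc t)
  have "d \<notin> S" using Suc.prems(1)[of d] by simp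
  consider "s = h" | "s = Suc h" | "s = Suc (Suc h)" | "h + 3 \<le> s" using Suc.prems(4) by linarith
  then show ?case
  proof cases
    case 1
    with Suc.prems show ?thesis by (intro halts_within_reject_step) (simp_all add: pow2_delta_simps)
  next
    case 2
    with Suc.prems \<open>d \<notin> S\<close> show ?thesis
      apply -
      apply (rule halts_within_plain_step, simp add: pow2_delta_simps, simp)
      apply (rule halts_within_reject_step, simp add: pow2_delta_simps, simp)
      done
  next
    case 3
    with Suc.prems \<open>d \<notin> S\<close> show ?thesis
      apply -
      apply (rule halts_within_plain_step, simp add: pow2_delta_simps, simp)
      apply (rule halts_within_plain_step, simp add: pow2_delta_simps, simp)
      apply (rule halts_within_reject_step, simp add: pow2_delta_simps, simp)
      done
  next
    case 4
    have "tape w h = Sym Lb" "tape w (Suc h) = Sym Lb" "tape w (Suc (Suc h)) = Sym Lb"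
      using 4 Suc.prems(2) by simp_all
    with Suc.prems \<open>d \<notin> S\<close> 4 show ?thesis
      apply -
      apply (rule halts_within_plain_step, simp add: pow2_delta_simps, simp)
      apply (rule halts_within_plain_step, simp add: pow2_delta_simps, simp)
      apply (rule halts_within_plain_step, simp add: pow2_delta_simps, simp)
      apply (simp (no_asm) only: move_simps, rule Suc.IH[where d = "Suc d"])
      apply simp_all
      done
  qed
qed

lemma reaches_erase_mark:
  assumes "q \<in> S" "q \<notin> D" "\<And>x. q \<le> x \<Longrightarrow> x \<le> q + 2 \<Longrightarrow> tape w x = Sym Lb" "q + 2 \<le> length w"
  shows "reaches pow2_oia w (axis_conf 13 q (2 * q) S S D None mv)
    (axis_conf 16 (q + 3) (2 * (q + 1)) (S - {q}) (S - {q}) (insert q D) None (mv + 5))"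
proof -
  have "tape w q = Sym Lb" "tape w (Suc q) = Sym Lb" "tape w (Suc (Suc q)) = Sym Lb"
    using assms(3) by simp_all
  with assms show ?thesis
    apply -
    apply (rule reaches_toggle_step, simp add: pow2_delta_simps, simp)
    apply (rule reaches_close_second_toggle, simp add: pow2_delta_simps, simp)
    apply (rule reaches_plain_step, simp add: pow2_delta_simps, simp)
    apply (rule reaches_axis_conf_eq; simp)
    done
qed

lemma round_extend:
  assumes "q \<in> S" "q \<notin> D" "q + g \<in> S" "\<And>x. q < x \<Longrightarrow> x < q + g \<Longrightarrow> x \<notin> S" "1 \<le> g"
    "q + 3 * g \<notin> S" "q + 3 * g \<notin> D" "\<And>x. q \<le> x \<Longrightarrow> x \<le> q + 3 * g \<Longrightarrow> tape w x = Sym Lb"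
    "q + 3 * g \<le> length w"
  shows "reaches pow2_oia w (axis_conf 13 q (2 * q) S S D None mv)
    (axis_conf 17 (q + 3 * g - 2) (2 * (q + g)) (insert (q + 3 * g) (S - {q})) (insert (q + 3 * g) (S - {q}))
       (insert q D) None (mv + 5 * g + 2))"
proof -
  have erase: "reaches pow2_oia w (axis_conf 13 q (2 * q) S S D None mv)
      (axis_conf 16 (q + 3) (2 * (q + 1)) (S - {q}) (S - {q}) (insert q D) None (mv + 5))"
    using assms by (intro reaches_erase_mark) simp_all
  have walk: "reaches pow2_oia w (axis_conf 16 (q + 3) (2 * (q + 1)) (S - {q}) (S - {q}) (insert q D) None (mv + 5))
     (axis_conf 16 (q + 3 * g) (2 * (q + g)) (S - {q}) (S - {q}) (insert q D) None (mv + 5 * g))"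
    apply (rule loop_q16[where t = "g - 1" and d = "q + 1"])
    subgoal for x using assms(4)[of x] assms(5) by simp
    subgoal for x using assms(8)[of x] assms(5) by simp
    using assms(5,9) by simp_all
  have "tape w (q + 3 * g) = Sym Lb" "tape w (q + 3 * g - 1) = Sym Lb"
    using assms(5,8) by simp_all
  with assms have mark: "reaches pow2_oia w
      (axis_conf 16 (q + 3 * g) (2 * (q + g)) (S - {q}) (S - {q}) (insert q D) None (mv + 5 * g))
      (axis_conf 17 (q + 3 * g - 2) (2 * (q + g)) (insert (q + 3 * g) (S - {q})) (insert (q + 3 * g) (S - {q}))
         (insert q D) None (mv + 5 * g + 2))"
    apply -
    apply (rule reaches_toggle_step, simp add: pow2_delta_simps, simp)
    apply (rule reaches_close_first_toggle, simp add: pow2_delta_simps, simp)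
    apply (rule reaches_axis_conf_eq; simp)
    done
  show ?thesis using reaches_trans[OF reaches_trans[OF erase walk] mark] .
qed

lemma round_extend_reject:
  assumes "q \<in> S" "q \<notin> D" "\<And>x. q < x \<Longrightarrow> x < q + g \<Longrightarrow> x \<notin> S" "1 \<le> g"
    "q < s" "s \<le> q + 3 * g" "\<And>x. q \<le> x \<Longrightarrow> x < s \<Longrightarrow> tape w x = Sym Lb" "tape w s \<noteq> Sym Lb"
    "s \<le> length w + 1"
  shows "halts_within pow2_oia w (axis_conf 13 q (2 * q) S S D None mv) False (mv + 5 * g)"
proof -
  have "tape w q = Sym Lb" using assms(5,7) by simp
  consider "s = Suc q" | "s = Suc (Suc q)" | "q + 3 \<le> s" using assms(5) by linarith
  then show ?thesis
  proof cases
    case 1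
    with assms \<open>tape w q = Sym Lb\<close> show ?thesis
      apply -
      apply (rule halts_within_toggle_step, simp add: pow2_delta_simps, simp)
      apply (rule halts_within_reject_step, simp add: pow2_delta_simps, simp)
      done
  next
    case 2
    have "tape w (Suc q) = Sym Lb" using 2 assms(7) by simp
    with 2 assms \<open>tape w q = Sym Lb\<close> show ?thesis
      apply -
      apply (rule halts_within_toggle_step, simp add: pow2_delta_simps, simp)
      apply (rule halts_within_close_second_toggle, simp add: pow2_delta_simps, simp)
      apply (rule halts_within_reject_step, simp add: pow2_delta_simps, simp)
      done
  next
    case 3
    have "reaches pow2_oia w (axis_conf 13 q (2 * q) S S D None mv)
        (axis_conf 16 (q + 3) (2 * (q + 1)) (S - {q}) (S - {q}) (insert q D) None (mv + 5))"
      using 3 assms by (intro reaches_erase_mark) simp_all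
    moreover have "halts_within pow2_oia w
        (axis_conf 16 (q + 3) (2 * (q + 1)) (S - {q}) (S - {q}) (insert q D) None (mv + 5)) False (mv + 5 * g)"
      apply (rule loop_q16_reject[where d = "q + 1" and t = "g - 1" and s = s])
      subgoal for x using assms(3)[of x] assms(4) by simp
      using 3 assms by simp_all
    ultimately show ?thesis by (rule halts_within_reaches)
  qed
qed

lemma round_return:
  assumes "\<And>x. n < x \<Longrightarrow> x \<le> h \<Longrightarrow> tape w x = Sym Lb" "tape w n = Sym La" "h \<le> length w" "n \<le> h"
    "\<And>x. n < x \<Longrightarrow> x < d \<Longrightarrow> x \<notin> S" "n < d" "n \<in> S" "d \<le> length w"
  shows "reaches pow2_oia w (axis_conf 17 h (2 * d) S S D None mv)
      (axis_conf 10 n (2 * n) S S D None (mv + (h - n) + 2 * (d - n)))"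
proof -
  have head_back: "reaches pow2_oia w (axis_conf 17 h (2 * d) S S D None mv)
      (axis_conf 17 n (2 * d) S S D None (mv + (h - n)))"
    apply (rule loop_q17[where t = "h - n"])
    subgoal for x using assms(1)[of x] assms(4) by simp
    using assms(3,4) by simp_all
  have detector_start: "reaches pow2_oia w (axis_conf 17 n (2 * d) S S D None (mv + (h - n)))
      (axis_conf 22 n (2 * (d - 1)) S S D None (mv + (h - n) + 2))"
    using assms
    apply -
    apply (rule reaches_plain_step, simp add: pow2_delta_simps, simp)
    apply (rule reaches_plain_step, simp add: pow2_delta_simps, simp)
    apply (rule reaches_axis_conf_eq; simp)
    done
  have detector_back: "reaches pow2_oia w (axis_conf 22 n (2 * (d - 1)) S S D None (mv + (h - n) + 2))
      (axis_conf 22 n (2 * n) S S D None (mv + (h - n) + 2 + 2 * (d - 1 - n)))"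
    apply (rule loop_q22[where t = "d - 1 - n" and b = n])
    subgoal for x using assms(5)[of x] assms(6) by simp
    using assms(6,8) by simp_all
  have enter_round: "reaches pow2_oia w (axis_conf 22 n (2 * n) S S D None (mv + (h - n) + 2 + 2 * (d - 1 - n)))
      (axis_conf 10 n (2 * n) S S D None (mv + (h - n) + 2 * (d - n)))"
    using assms
    apply -
    apply (rule reaches_plain_step, simp add: pow2_delta_simps, simp)
    apply (rule reaches_axis_conf_eq; simp)
    done
  show ?thesis by (rule reaches_trans[OF reaches_trans[OF reaches_trans[OF head_back detector_start] detector_back] enter_round])
qed

lemma reaches_end_of_a_block:
  assumes "1 \<le> n" "n \<le> length w" "\<And>p. 1 \<le> p \<Longrightarrow> p \<le> n \<Longrightarrow> tape w p = Sym La"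
  shows "reaches pow2_oia w (init pow2_oia w) (axis_conf 2 (Suc n) 0 {} {} {} None (Suc n))"
proof -
  have "tape w 1 = Sym La" "w \<noteq> []" using assms(1,2) assms(3)[of 1] by auto
  then have first_a: "reaches pow2_oia w (axis_conf 0 0 0 {} {} {} None 0) (axis_conf 2 2 0 {} {} {} None 2)"
    using assms(1,2)
    apply -
    apply (rule reaches_plain_step, simp add: pow2_delta_simps, simp)
    apply (rule reaches_plain_step, simp add: pow2_delta_simps, simp)
    apply (rule reaches_axis_conf_eq; simp)
    done
  have skip_a: "reaches pow2_oia w (axis_conf 2 2 0 {} {} {} None 2) (axis_conf 2 (Suc n) 0 {} {} {} None (Suc n))"
    apply (rule loop_q2[where t = "n - 1"])
    subgoal for x using assms(3)[of x] by simp
    using assms(1,2) by simp_all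
  show ?thesis unfolding init_pow2_oia by (rule reaches_trans[OF first_a skip_a])
qed

section \<open>Rounds\<close>

(* After round i (1 \<le> i \<le> n) on an input whose a-block ends at cell n: the marked cells, the
  cells whose mark has already been erased, and the number of moves made so far (round_cost is
  meaningless for i = 0 because of the truncated subtraction). *)
definition marked :: "nat \<Rightarrow> nat \<Rightarrow> nat set" where
  "marked n i = {x. n - i < x \<and> x \<le> n} \<union> {n + 2 ^ (i - 1), n + 2 ^ i}"

definition erased :: "nat \<Rightarrow> nat \<Rightarrow> nat set" where
  "erased n i = {n + 2 ^ j | j. Suc j < i}"

definition round_cost :: "nat \<Rightarrow> nat \<Rightarrow> nat" where
  "round_cost n i = 3 * n + 3 * i * (i - 1) + 8 * 2 ^ i - 12"

lemma marked_Suc_iff: "x \<in> marked n (Suc m) \<longleftrightarrow> (n - Suc m < x \<and> x \<le> n) \<or> x = n + 2 ^ m \<or> x = n + 2 * 2 ^ m"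
  by (auto simp: marked_def)

lemma erased_Suc_iff: "x \<in> erased n (Suc m) \<longleftrightarrow> (\<exists>j<m. x = n + 2 ^ j)"
  by (auto simp: erased_def)

definition round_conf :: "nat \<Rightarrow> nat \<Rightarrow> nat \<Rightarrow> conf" where
  "round_conf n i mv = axis_conf 10 n (2 * n) (marked n i) (marked n i) (erased n i) None mv"

lemma round_cost_Suc:
  assumes "1 \<le> i"
  shows "round_cost n (Suc i) = round_cost n i + 6 * i + 8 * 2 ^ i"
proof -
  obtain j where i: "i = Suc j" using assms by (cases i) auto
  have "(12::nat) \<le> 16 * 2 ^ j" using one_le_power[of "2::nat" j] by linarith
  then show ?thesis unfolding round_cost_def i by (simp add: algebra_simps)
qed

lemma round_cost_mono: "1 \<le> i \<Longrightarrow> round_cost n i \<le> round_cost n (Suc i)"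
  using round_cost_Suc by simp

locale ab_prefix =
  fixes w :: "ab list" and n k :: nat
  assumes n_pos: "1 \<le> n" and k_pos: "1 \<le> k"
  and tape_a: "\<And>p. 1 \<le> p \<Longrightarrow> p \<le> n \<Longrightarrow> tape w p = Sym La"
  and tape_b: "\<And>p. n < p \<Longrightarrow> p \<le> n + k \<Longrightarrow> tape w p = Sym Lb"
  and tape_after_b: "tape w (Suc (n + k)) \<noteq> Sym Lb"
  and b_block_le_length: "n + k \<le> length w"
begin

lemma reaches_b_block: "reaches pow2_oia w (init pow2_oia w) (axis_conf 2 (Suc n) 0 {} {} {} None (Suc n))"
  using b_block_le_length by (intro reaches_end_of_a_block n_pos tape_a) simp_all

lemma reaches_round_1:
  assumes "2 \<le> k"
  shows "reaches pow2_oia w (init pow2_oia w) (round_conf n 1 (round_cost n 1))"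
proof -
  have tapes: "tape w n = Sym La" "tape w (Suc n) = Sym Lb" "tape w (Suc (Suc n)) = Sym Lb"
    using tape_a[of n] tape_b[of "Suc n"] tape_b[of "Suc (Suc n)"] n_pos assms by simp_all
  have len: "Suc (Suc n) \<le> length w" using b_block_le_length assms by simp
  have three_marks: "reaches pow2_oia w (axis_conf 2 (Suc n) 0 {} {} {} None (Suc n))
     (axis_conf 9 n 2 {n, Suc n, Suc (Suc n)} {n, Suc n, Suc (Suc n)} {} None (n + 6))"
    using tapes len n_pos
    apply -
    apply (rule reaches_toggle_step, simp add: pow2_delta_simps, simp)
    apply (rule reaches_close_first_toggle, simp add: pow2_delta_simps, simp)
    apply (rule reaches_toggle_step, simp add: pow2_delta_simps, simp)
    apply (rule reaches_close_first_toggle, simp add: pow2_delta_simps, simp)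
    apply (rule reaches_toggle_step, simp add: pow2_delta_simps, simp)
    apply (rule reaches_close_first_toggle, simp add: pow2_delta_simps, simp)
    apply (rule reaches_axis_conf_eq; auto)
    done
  have detector_to_n: "reaches pow2_oia w (axis_conf 9 n 2 {n, Suc n, Suc (Suc n)} {n, Suc n, Suc (Suc n)} {} None (n + 6))
     (axis_conf 9 n (2 * n) {n, Suc n, Suc (Suc n)} {n, Suc n, Suc (Suc n)} {} None (n + 6 + 2 * (n - 1)))"
    apply (rule loop_q9[where t = "n - 1" and d = 1])
    using len n_pos by auto
  have round_1_sets: "marked n (Suc 0) = {n, Suc n, Suc (Suc n)}" "erased n (Suc 0) = {}"
    using n_pos by (auto simp: marked_def erased_def)
  have enter_round: "reaches pow2_oia w (axis_conf 9 n (2 * n) {n, Suc n, Suc (Suc n)} {n, Suc n, Suc (Suc n)} {} None (n + 6 + 2 * (n - 1)))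
     (axis_conf 10 n (2 * n) (marked n 1) (marked n 1) (erased n 1) None (round_cost n 1))"
    using len n_pos
    apply -
    apply (rule reaches_plain_step, simp add: pow2_delta_simps, simp)
    apply (rule reaches_axis_conf_eq; simp add: round_1_sets round_cost_def)
    done
  show ?thesis unfolding round_conf_def
    by (rule reaches_trans[OF reaches_trans[OF reaches_trans[OF reaches_b_block three_marks] detector_to_n] enter_round])
qed

lemma round_1_reject:
  assumes "k = 1"
  shows "halts_within pow2_oia w (init pow2_oia w) False (round_cost n 1)"
proof -
  have tapes: "tape w (Suc n) = Sym Lb" "tape w (Suc (Suc n)) \<noteq> Sym Lb"
    using tape_b[of "Suc n"] tape_after_b n_pos assms by simp_all
  have len: "Suc n \<le> length w" using b_block_le_length assms by simp
  have "halts_within pow2_oia w (axis_conf 2 (Suc n) 0 {} {} {} None (Suc n)) False (round_cost n 1)"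
    using tapes len
    apply -
    apply (rule halts_within_toggle_step, simp add: pow2_delta_simps, simp)
    apply (rule halts_within_reject_step, simp add: pow2_delta_simps, simp add: round_cost_def)
    done
  then show ?thesis by (rule halts_within_reaches[OF reaches_b_block])
qed

lemma round_start:
  assumes "Suc m < n" "2 ^ Suc m \<le> k"
  shows "reaches pow2_oia w (round_conf n (Suc m) mv)
    (axis_conf 13 (n + 2 ^ m) (2 * (n + 2 ^ m)) (insert (n - Suc m) (marked n (Suc m))) (insert (n - Suc m) (marked n (Suc m)))
      (erased n (Suc m)) None (mv + 6 * Suc m + 3 * 2 ^ m))"
proof -
  let ?S = "marked n (Suc m)" and ?D = "erased n (Suc m)"
  let ?x = "n - Suc m"
  have pow_le_k: "2 ^ m \<le> k" using assms(2) by (rule order.trans[rotated]) simp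
  have len: "n + 2 ^ m \<le> length w" using b_block_le_length pow_le_k by simp
  have to_counter_end: "reaches pow2_oia w (axis_conf 10 n (2 * n) ?S ?S ?D None mv)
      (axis_conf 10 ?x (2 * ?x) ?S ?S ?D None (mv + 3 * Suc m))"
    apply (rule loop_q10[where t = "Suc m"])
    subgoal for x using assms(1) by (simp add: marked_Suc_iff)
    using assms(1) len by simp_all
  have counter_cell_unmarked: "?x \<notin> ?S" "?x \<notin> ?D" using assms(1) by (auto simp: marked_Suc_iff erased_Suc_iff)
  have counter_cell_a: "tape w ?x = Sym La" using tape_a[of ?x] assms(1) by simp
  have mark_counter_cell: "reaches pow2_oia w (axis_conf 10 ?x (2 * ?x) ?S ?S ?D None (mv + 3 * Suc m))
     (axis_conf 13 (Suc ?x) (2 * Suc ?x) (insert ?x ?S) (insert ?x ?S) ?D None (mv + 3 * Suc m + 3))"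
    using counter_cell_unmarked counter_cell_a assms(1) len b_block_le_length k_pos
    apply -
    apply (rule reaches_toggle_step, simp add: pow2_delta_simps, (simp, (intro conjI; linarith)?))
    apply (rule reaches_close_first_toggle, simp add: pow2_delta_simps, simp)
    apply (rule reaches_axis_conf_eq; simp)
    done
  have to_left_mark: "reaches pow2_oia w (axis_conf 13 (Suc ?x) (2 * Suc ?x) (insert ?x ?S) (insert ?x ?S) ?D None (mv + 3 * Suc m + 3))
     (axis_conf 13 (n + 2 ^ m) (2 * (n + 2 ^ m)) (insert ?x ?S) (insert ?x ?S) ?D None (mv + 6 * Suc m + 3 * 2 ^ m))"
    apply (rule loop_q13[where t = "n + 2 ^ m - Suc ?x"])
    subgoal for x
    proof -
      assume range: "Suc (n - Suc m) \<le> x" "x < Suc (n - Suc m) + (n + 2 ^ m - Suc (n - Suc m))"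
      show ?thesis
      proof (cases "x \<le> n")
        case True then show ?thesis using tape_a[of x] range assms(1) by simp
      next
        case False
        then have "x < n + 2 ^ m" using range assms(1) by simp
        then show ?thesis using tape_b[of x] False pow_le_k by (auto simp: marked_Suc_iff)
      qed
    qed
    using assms(1) len by simp_all
  show ?thesis unfolding round_conf_def by (rule reaches_trans[OF reaches_trans[OF to_counter_end mark_counter_cell] to_left_mark])
qed

lemma round_step:
  assumes "Suc m < n" "2 ^ Suc (Suc m) \<le> k"
  shows "reaches pow2_oia w (round_conf n (Suc m) mv)
      (round_conf n (Suc (Suc m)) (mv + 6 * Suc m + 8 * 2 ^ Suc m))"
proof -
  let ?S1 = "insert (n - Suc m) (marked n (Suc m))" and ?D = "erased n (Suc m)"
  define g :: nat where "g = 2 ^ m"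
  have "1 \<le> g" "4 * g \<le> k" using assms(2) unfolding g_def by simp_all
  then have len: "n + 4 * g \<le> length w" using b_block_le_length by simp
  have start: "reaches pow2_oia w (round_conf n (Suc m) mv)
      (axis_conf 13 (n + g) (2 * (n + g)) ?S1 ?S1 ?D None (mv + 6 * Suc m + 3 * g))"
    unfolding g_def by (rule round_start) (use assms in simp_all)
  have marked_iff: "x \<in> marked n (Suc m) \<longleftrightarrow> (n - Suc m < x \<and> x \<le> n) \<or> x = n + g \<or> x = n + 2 * g" for x
    unfolding g_def by (simp add: marked_Suc_iff)
  have not_erased: "\<not> (\<exists>j<m. n + g = n + 2 ^ j)" "\<not> (\<exists>j<m. n + 4 * g = n + 2 ^ j)"
  proof -
    show "\<not> (\<exists>j<m. n + g = n + 2 ^ j)" unfolding g_def by auto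
    show "\<not> (\<exists>j<m. n + 4 * g = n + 2 ^ j)"
    proof
      assume "\<exists>j<m. n + 4 * g = n + 2 ^ j"
      then obtain j where "j < m" "4 * g = 2 ^ j" by auto
      moreover have "(2::nat) ^ j < 2 ^ m" using \<open>j < m\<close> by simp
      ultimately show False unfolding g_def by simp
    qed
  qed
  let ?S2 = "insert (n + g + 3 * g) (?S1 - {n + g})" and ?D2 = "insert (n + g) ?D"
  have extend: "reaches pow2_oia w (axis_conf 13 (n + g) (2 * (n + g)) ?S1 ?S1 ?D None (mv + 6 * Suc m + 3 * g))
      (axis_conf 17 (n + g + 3 * g - 2) (2 * (n + g + g)) ?S2 ?S2 ?D2 None (mv + 6 * Suc m + 3 * g + 5 * g + 2))"
    using \<open>1 \<le> g\<close> \<open>4 * g \<le> k\<close> not_erased assms(1) len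
    by (intro round_extend) (simp_all add: marked_iff erased_Suc_iff tape_b)
  have return: "reaches pow2_oia w
      (axis_conf 17 (n + g + 3 * g - 2) (2 * (n + g + g)) ?S2 ?S2 ?D2 None (mv + 6 * Suc m + 3 * g + 5 * g + 2))
      (axis_conf 10 n (2 * n) ?S2 ?S2 ?D2 None
        (mv + 6 * Suc m + 3 * g + 5 * g + 2 + (n + g + 3 * g - 2 - n) + 2 * (n + g + g - n)))"
    apply (rule round_return)
    subgoal for x using tape_b[of x] \<open>4 * g \<le> k\<close> by simp
    using tape_a[of n] n_pos len \<open>1 \<le> g\<close> assms(1) by (auto simp: marked_iff)
  have marks_eq: "?S2 = marked n (Suc (Suc m))"
    using assms(1) \<open>1 \<le> g\<close> unfolding g_def by (auto simp: marked_def)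
  have erased_eq: "?D2 = erased n (Suc (Suc m))"
    unfolding g_def by (auto simp: erased_def less_Suc_eq)
  have cost_eq: "mv + 6 * Suc m + 3 * g + 5 * g + 2 + (n + g + 3 * g - 2 - n) + 2 * (n + g + g - n)
      = mv + 6 * Suc m + 8 * 2 ^ Suc m"
    using \<open>1 \<le> g\<close> unfolding g_def by simp
  show ?thesis
    using reaches_trans[OF reaches_trans[OF start extend] return]
    unfolding marks_eq erased_eq cost_eq round_conf_def .
qed

lemma round_reject:
  assumes "Suc m < n" "2 ^ Suc m \<le> k" "k < 2 ^ Suc (Suc m)"
  shows "halts_within pow2_oia w (round_conf n (Suc m) mv) False (mv + 6 * Suc m + 8 * 2 ^ Suc m)"
proof -
  let ?S = "insert (n - Suc m) (marked n (Suc m))" and ?D = "erased n (Suc m)"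
  define g :: nat where "g = 2 ^ m"
  have "1 \<le> g" "2 * g \<le> k" "k < 4 * g" using assms(2,3) unfolding g_def by simp_all
  have start: "reaches pow2_oia w (round_conf n (Suc m) mv)
      (axis_conf 13 (n + g) (2 * (n + g)) ?S ?S ?D None (mv + 6 * Suc m + 3 * g))"
    unfolding g_def by (rule round_start) (use assms in simp_all)
  have marked_iff: "x \<in> marked n (Suc m) \<longleftrightarrow> (n - Suc m < x \<and> x \<le> n) \<or> x = n + g \<or> x = n + 2 * g" for x
    unfolding g_def by (simp add: marked_Suc_iff)
  have "n + g \<notin> ?D" unfolding g_def by (auto simp: erased_Suc_iff)
  then have "halts_within pow2_oia w (axis_conf 13 (n + g) (2 * (n + g)) ?S ?S ?D None (mv + 6 * Suc m + 3 * g))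
      False (mv + 6 * Suc m + 3 * g + 5 * g)"
    using \<open>1 \<le> g\<close> \<open>2 * g \<le> k\<close> \<open>k < 4 * g\<close> assms(1) tape_after_b b_block_le_length
    by (intro round_extend_reject[where s = "Suc (n + k)"]) (simp_all add: marked_iff tape_b)
  then have "halts_within pow2_oia w (round_conf n (Suc m) mv) False (mv + 6 * Suc m + 3 * g + 5 * g)"
    by (rule halts_within_reaches[OF start])
  then show ?thesis by (rule halts_within_mono) (simp add: g_def)
qed

lemma reaches_last_mark:
  assumes "n = Suc m" "2 ^ n \<le> k"
  shows "reaches pow2_oia w (round_conf n n mv) (axis_conf 26 (Suc (n + 2 ^ n)) (Suc (2 * (n + 2 ^ n)))
    (marked n n) (marked n n) (erased n n) None (mv + 6 * n + 3 * 2 ^ n + 2))"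
proof -
  define g :: nat where "g = 2 ^ m"
  have "1 \<le> g" "2 * g \<le> k" using assms unfolding g_def by simp_all
  have pow_n: "(2::nat) ^ n = 2 * g" using assms(1) unfolding g_def by simp
  let ?S = "marked n n" and ?D = "erased n n"
  have marked_iff: "x \<in> ?S \<longleftrightarrow> (0 < x \<and> x \<le> n) \<or> x = n + g \<or> x = n + 2 * g" for x
    using assms(1) unfolding g_def by (auto simp: marked_def)
  have len: "n + 2 * g \<le> length w" using b_block_le_length \<open>2 * g \<le> k\<close> by simp
  have to_cent: "reaches pow2_oia w (axis_conf 10 n (2 * n) ?S ?S ?D None mv)
      (axis_conf 10 0 0 ?S ?S ?D None (mv + 3 * n))"
    by (rule loop_q10[where t = n and b = 0]) (use len in \<open>simp_all add: marked_iff\<close>)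
  have off_cent: "reaches pow2_oia w (axis_conf 10 0 0 ?S ?S ?D None (mv + 3 * n))
      (axis_conf 20 1 2 ?S ?S ?D None (mv + 3 * n + 3))"
    using len n_pos
    apply -
    apply (rule reaches_plain_step, simp add: pow2_delta_simps marked_iff, simp)
    apply (rule reaches_plain_step, simp add: pow2_delta_simps, simp)
    apply (rule reaches_axis_conf_eq; simp)
    done
  have to_first_mark: "reaches pow2_oia w (axis_conf 20 1 2 ?S ?S ?D None (mv + 3 * n + 3))
      (axis_conf 20 (n + g) (2 * (n + g)) ?S ?S ?D None (mv + 3 * n + 3 + 3 * (n + g - 1)))"
    apply (rule loop_q20[where t = "n + g - 1"])
    subgoal for x
      using tape_a[of x] tape_b[of x] \<open>2 * g \<le> k\<close> by (cases "x \<le> n") (auto simp: marked_iff)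
    using len \<open>1 \<le> g\<close> by simp_all
  have past_first_mark: "reaches pow2_oia w
      (axis_conf 20 (n + g) (2 * (n + g)) ?S ?S ?D None (mv + 3 * n + 3 + 3 * (n + g - 1)))
      (axis_conf 23 (Suc (n + g)) (2 * Suc (n + g)) ?S ?S ?D None (mv + 3 * n + 3 + 3 * (n + g - 1) + 3))"
    using len \<open>1 \<le> g\<close> tape_b[of "n + g"] \<open>2 * g \<le> k\<close>
    apply -
    apply (rule reaches_plain_step, simp add: pow2_delta_simps marked_iff, simp)
    apply (rule reaches_plain_step, simp add: pow2_delta_simps, simp)
    apply (rule reaches_axis_conf_eq; simp)
    done
  have to_second_mark: "reaches pow2_oia w
      (axis_conf 23 (Suc (n + g)) (2 * Suc (n + g)) ?S ?S ?D None (mv + 3 * n + 3 + 3 * (n + g - 1) + 3))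
      (axis_conf 23 (n + 2 * g) (2 * (n + 2 * g)) ?S ?S ?D None
        (mv + 3 * n + 3 + 3 * (n + g - 1) + 3 + 3 * (g - 1)))"
    apply (rule loop_q23[where t = "g - 1"])
    subgoal for x using tape_b[of x] \<open>2 * g \<le> k\<close> by (auto simp: marked_iff)
    using len \<open>1 \<le> g\<close> by simp_all
  have past_second_mark: "reaches pow2_oia w
      (axis_conf 23 (n + 2 * g) (2 * (n + 2 * g)) ?S ?S ?D None
        (mv + 3 * n + 3 + 3 * (n + g - 1) + 3 + 3 * (g - 1)))
      (axis_conf 26 (Suc (n + 2 * g)) (Suc (2 * (n + 2 * g))) ?S ?S ?D None (mv + 6 * n + 3 * (2 * g) + 2))"
    using len \<open>1 \<le> g\<close> tape_b[of "n + 2 * g"] \<open>2 * g \<le> k\<close>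
    apply -
    apply (rule reaches_plain_step, simp add: pow2_delta_simps marked_iff, simp)
    apply (rule reaches_axis_conf_eq; simp)
    done
  show ?thesis
    using reaches_trans[OF reaches_trans[OF reaches_trans[OF reaches_trans[OF reaches_trans[OF
        to_cent off_cent] to_first_mark] past_first_mark] to_second_mark] past_second_mark]
    unfolding round_conf_def pow_n .
qed

lemma final_check:
  assumes "n = Suc m" "2 ^ n \<le> k"
  shows "halts_within pow2_oia w (round_conf n n mv) (k = 2 ^ n \<and> length w = n + k) (mv + 6 * n + 3 * 2 ^ n + 2)"
proof -
  let ?c = "\<lambda>q. axis_conf q (Suc (n + 2 ^ n)) (Suc (2 * (n + 2 ^ n))) (marked n n) (marked n n) (erased n n) None
    (mv + 6 * n + 3 * 2 ^ n + 2)"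
  have last_mark: "reaches pow2_oia w (round_conf n n mv) (?c 26)"
    by (rule reaches_last_mark[OF assms])
  show ?thesis
  proof (cases "k = 2 ^ n \<and> length w = n + k")
    case True
    then have verdict: "(k = 2 ^ n \<and> length w = n + k) = True" by simp
    from True have "tape w (Suc (n + 2 ^ n)) = Dollar" by (simp add: tape_def)
    then have accept: "reaches pow2_oia w (?c 26) (?c 24)"
      apply -
      apply (rule reaches_plain_step, simp add: pow2_delta_simps, simp)
      apply (rule reaches_axis_conf_eq; simp)
      done
    have "accepting_conf pow2_oia w (?c 24)" by (rule accepting_axis_conf) simp
    then show ?thesis unfolding verdict
      by (intro halts_within_halting[OF reaches_trans[OF last_mark accept]]) (simp_all add: halting_axis_conf)
  next
    case False
    then have verdict: "(k = 2 ^ n \<and> length w = n + k) = False" by simp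
    have "Suc (n + 2 ^ n) \<le> length w" using False b_block_le_length assms(2) by auto
    then have "tape w (Suc (n + 2 ^ n)) \<noteq> Dollar" by (simp add: tape_def)
    then have "halts_within pow2_oia w (?c 26) False (mv + 6 * n + 3 * 2 ^ n + 2)"
      by (intro halts_within_reject_step) (simp_all add: pow2_delta_simps)
    then show ?thesis unfolding verdict by (rule halts_within_reaches[OF last_mark])
  qed
qed

lemma rounds:
  assumes "1 \<le> i" "i \<le> n"
  shows "2 ^ i \<le> k \<and> reaches pow2_oia w (init pow2_oia w) (round_conf n i (round_cost n i))
    \<or> k < 2 ^ i \<and> halts_within pow2_oia w (init pow2_oia w) False (round_cost n i)"
  using assms
proof (induction i rule: nat_induct_at_least)
  case base
  show ?case
  proof (cases "2 \<le> k")
    case True then show ?thesis using reaches_round_1 by simp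
  next
    case False then have "k = 1" using k_pos by simp
    then show ?thesis using round_1_reject by simp
  qed
next
  case (Suc i)
  obtain m where m: "i = Suc m" using Suc.hyps by (cases i) auto
  have lt: "Suc m < n" using Suc.prems m by simp
  have "i \<le> n" using Suc.prems by simp
  with Suc.IH consider
      (continue) "2 ^ i \<le> k" "reaches pow2_oia w (init pow2_oia w) (round_conf n i (round_cost n i))"
    | (rejected) "k < 2 ^ i" "halts_within pow2_oia w (init pow2_oia w) False (round_cost n i)"
    by blast
  then show ?case
  proof cases
    case continue
    show ?thesis
    proof (cases "2 ^ Suc i \<le> k")
      case True
      have "reaches pow2_oia w (round_conf n i (round_cost n i)) (round_conf n (Suc i) (round_cost n (Suc i)))"
        unfolding m round_cost_Suc[OF Suc.hyps, unfolded m] by (rule round_step) (use lt True m in simp_all)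
      then show ?thesis using reaches_trans[OF continue(2)] True by simp
    next
      case False
      have "halts_within pow2_oia w (round_conf n i (round_cost n i)) False (round_cost n (Suc i))"
        unfolding m round_cost_Suc[OF Suc.hyps, unfolded m]
        by (rule round_reject) (use lt False continue m in simp_all)
      then show ?thesis using halts_within_reaches[OF continue(2)] False by simp
    qed
  next
    case rejected
    have "k < 2 ^ Suc i" using rejected(1) by simp
    then show ?thesis using halts_within_mono[OF rejected(2) round_cost_mono[OF Suc.hyps]] by simp
  qed
qed

lemma ab_prefix_halts:
  "halts_within pow2_oia w (init pow2_oia w) (k = 2 ^ n \<and> length w = n + k)
     (round_cost n n + 6 * n + 3 * 2 ^ n + 2)"
proof -
  obtain m where m: "n = Suc m" using n_pos by (cases n) auto
  from rounds[OF n_pos order.refl] show ?thesis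
  proof (elim disjE conjE)
    assume "2 ^ n \<le> k" and reach: "reaches pow2_oia w (init pow2_oia w) (round_conf n n (round_cost n n))"
    show ?thesis by (rule halts_within_reaches[OF reach final_check[OF m \<open>2 ^ n \<le> k\<close>]])
  next
    assume "k < 2 ^ n" and rejected: "halts_within pow2_oia w (init pow2_oia w) False (round_cost n n)"
    then have verdict: "(k = 2 ^ n \<and> length w = n + k) = False" by simp
    show ?thesis unfolding verdict by (rule halts_within_mono[OF rejected]) simp
  qed
qed

end

section \<open>Correctness and running time\<close>

lemma halts_within_only_a:
  "halts_within pow2_oia (replicate n La) (init pow2_oia (replicate n La)) False (n + 1)"
proof (cases "n = 0")
  case True
  then show ?thesis unfolding init_pow2_oia
    apply -
    apply (rule halts_within_plain_step, simp add: pow2_delta_simps, simp)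
    apply (rule halts_within_reject_step, simp add: pow2_delta_simps tape_def, simp)
    done
next
  case False
  then have to_dollar: "reaches pow2_oia (replicate n La) (init pow2_oia (replicate n La))
      (axis_conf 2 (Suc n) 0 {} {} {} None (Suc n))"
    by (intro reaches_end_of_a_block) (auto simp: tape_def)
  have "tape (replicate n La) (Suc n) = Dollar" by (simp add: tape_def)
  then have "halts_within pow2_oia (replicate n La) (axis_conf 2 (Suc n) 0 {} {} {} None (Suc n)) False (n + 1)"
    by (intro halts_within_reject_step) (simp_all add: pow2_delta_simps)
  then show ?thesis by (rule halts_within_reaches[OF to_dollar])
qed

lemma halts_within_starting_with_b:
  assumes "w = replicate k Lb @ r" "1 \<le> k" "r = [] \<or> (\<exists>r'. r = La # r')"
  shows "halts_within pow2_oia w (init pow2_oia w) (k = 1 \<and> r = []) 2"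
proof -
  have "w \<noteq> []" using assms by simp
  moreover have "tape w 1 = Sym Lb" using assms by (cases k) (auto simp: tape_def)
  ultimately have reach: "reaches pow2_oia w (init pow2_oia w) (axis_conf 3 2 0 {} {} {} None 2)"
    unfolding init_pow2_oia
    apply -
    apply (rule reaches_plain_step, simp add: pow2_delta_simps, simp)
    apply (rule reaches_plain_step, simp add: pow2_delta_simps, simp)
    apply (rule reaches_axis_conf_eq; simp)
    done
  show ?thesis
  proof (cases "k = 1 \<and> r = []")
    case True
    then have "tape w 2 = Dollar" using assms by (simp add: tape_def)
    then have accept: "reaches pow2_oia w (axis_conf 3 2 0 {} {} {} None 2) (axis_conf 24 2 0 {} {} {} None 2)"
      apply -
      apply (rule reaches_plain_step, simp add: pow2_delta_simps, simp)
      apply (rule reaches_axis_conf_eq; simp)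
      done
    show ?thesis
      using True by (intro halts_within_halting[OF reaches_trans[OF reach accept]])
        (simp_all add: halting_axis_conf accepting_axis_conf)
  next
    case False
    then have verdict: "(k = 1 \<and> r = []) = False" by simp
    have "tape w 2 \<noteq> Dollar"
    proof (cases "k = 1")
      case True
      then show ?thesis using False assms by (cases r) (auto simp: tape_def)
    next
      case False
      then show ?thesis using assms by (simp add: tape_def nth_append)
    qed
    then have "halts_within pow2_oia w (axis_conf 3 2 0 {} {} {} None 2) False 2"
      by (intro halts_within_reject_step) (simp_all add: pow2_delta_simps)
    then show ?thesis unfolding verdict by (rule halts_within_reaches[OF reach])
  qed
qed

lemma ab_prefix_of_decomposition:
  assumes w: "w = replicate n La @ replicate k Lb @ r" and "r = [] \<or> (\<exists>r'. r = La # r')" "1 \<le> n" "1 \<le> k"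
  shows "ab_prefix w n k"
proof
  have len: "length w = n + k + length r" using w by simp
  then show "1 \<le> n" "1 \<le> k" "n + k \<le> length w" using assms by simp_all
  show "tape w p = Sym La" if "1 \<le> p" "p \<le> n" for p
  proof -
    have "p - 1 < n" "p \<le> length w" using that len by simp_all
    then show ?thesis using that w by (simp add: tape_def nth_append)
  qed
  show "tape w p = Sym Lb" if "n < p" "p \<le> n + k" for p
  proof -
    have "\<not> p - 1 < n" "p - 1 - n < k" "p \<le> length w" "p \<noteq> 0" using that len by simp_all
    then show ?thesis using w by (simp add: tape_def nth_append)
  qed
  show "tape w (Suc (n + k)) \<noteq> Sym Lb"
    using assms(2) len w by (cases r) (auto simp: tape_def nth_append)
qed

definition pow2_time :: "nat \<Rightarrow> nat" where
  "pow2_time n = round_cost n n + 7 * n + 3 * 2 ^ n + 5"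

lemma pow2_oia_halts:
  assumes w: "w = replicate n La @ replicate k Lb @ r" and "r = [] \<or> (\<exists>r'. r = La # r')" "k = 0 \<longrightarrow> r = []"
  shows "halts_within pow2_oia w (init pow2_oia w) (k = 2 ^ n \<and> r = []) (pow2_time n)"
proof -
  consider (no_b) "k = 0" | (no_a) "k \<noteq> 0" "n = 0" | (ab) "k \<noteq> 0" "n \<noteq> 0" by blast
  then show ?thesis
  proof cases
    case no_b
    then have "w = replicate n La" and verdict: "(k = 2 ^ n \<and> r = []) = False" using assms by simp_all
    then show ?thesis
      unfolding verdict by (simp add: halts_within_mono[OF halts_within_only_a] pow2_time_def)
  next
    case no_a
    then have "halts_within pow2_oia w (init pow2_oia w) (k = 2 ^ n \<and> r = []) 2"
      using halts_within_starting_with_b[of w k r] assms by simp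
    then show ?thesis by (rule halts_within_mono) (simp add: pow2_time_def)
  next
    case ab
    interpret ab_prefix w n k
      using ab_prefix_of_decomposition[OF assms(1,2)] ab by simp
    have verdict: "(k = 2 ^ n \<and> length w = n + k) = (k = 2 ^ n \<and> r = [])" using w by simp
    show ?thesis
      using ab_prefix_halts unfolding verdict by (rule halts_within_mono) (simp add: pow2_time_def)
  qed
qed

lemma ab_decomposition:
  "\<exists>n k r. w = replicate n La @ replicate k Lb @ r \<and> (r = [] \<or> (\<exists>r'. r = La # r')) \<and> (k = 0 \<longrightarrow> r = [])"
proof (induction w)
  case Nil
  show ?case by simp
next
  case (Cons x w)
  then obtain n k r where w: "w = replicate n La @ replicate k Lb @ r" "r = [] \<or> (\<exists>r'. r = La # r')"
    "k = 0 \<longrightarrow> r = []"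
    by blast
  show ?case
  proof (cases x)
    case La
    then show ?thesis using w by (intro exI[of _ "Suc n"] exI[of _ k] exI[of _ r]) simp
  next
    case Lb
    show ?thesis
    proof (cases n)
      case 0
      then show ?thesis using w Lb by (intro exI[of _ 0] exI[of _ "Suc k"] exI[of _ r]) simp
    next
      case (Suc n')
      then show ?thesis using w Lb by (intro exI[of _ 0] exI[of _ 1] exI[of _ w]) simp
    qed
  qed
qed

lemma takeWhile_replicate_append:
  "takeWhile (\<lambda>x. x = a) (replicate n a @ ys) = replicate n a @ takeWhile (\<lambda>x. x = a) ys"
  by (induction n) auto

lemma takeWhile_La_decomposition:
  "r = [] \<or> (\<exists>r'. r = La # r') \<Longrightarrow> k = 0 \<longrightarrow> r = []
    \<Longrightarrow> takeWhile (\<lambda>x. x = La) (replicate n La @ replicate k Lb @ r) = replicate n La"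
  by (cases k) (auto simp: takeWhile_replicate_append)

lemma takeWhile_Lb_decomposition:
  "r = [] \<or> (\<exists>r'. r = La # r') \<Longrightarrow> takeWhile (\<lambda>x. x = Lb) (replicate k Lb @ r) = replicate k Lb"
  by (auto simp: takeWhile_replicate_append)

lemma pow2_language_iff:
  assumes w: "w = replicate n La @ replicate k Lb @ r" and "r = [] \<or> (\<exists>r'. r = La # r')" "k = 0 \<longrightarrow> r = []"
  shows "w \<in> {replicate n La @ replicate (2 ^ n) Lb | n. True} \<longleftrightarrow> k = 2 ^ n \<and> r = []"
proof
  assume "w \<in> {replicate n La @ replicate (2 ^ n) Lb | n. True}"
  then obtain n' where w': "w = replicate n' La @ replicate (2 ^ n') Lb @ []" by auto
  have "replicate n La = replicate n' La"
    using takeWhile_La_decomposition[of r k n] takeWhile_La_decomposition[of "[]" "2 ^ n'" n'] assms w'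
    by simp
  then have "n = n'" by simp
  then have rest: "replicate k Lb @ r = replicate (2 ^ n') Lb @ []" using w w' by simp
  have "replicate k Lb = replicate (2 ^ n') Lb"
    using arg_cong[OF rest, of "takeWhile (\<lambda>x. x = Lb)"] takeWhile_Lb_decomposition[of r k]
      takeWhile_Lb_decomposition[of "[]" "2 ^ n'"] assms(2)
    by simp
  then show "k = 2 ^ n \<and> r = []" using rest \<open>n = n'\<close> by simp
next
  assume "k = 2 ^ n \<and> r = []"
  then show "w \<in> {replicate n La @ replicate (2 ^ n) Lb | n. True}" using w by auto
qed

lemma square_le_pow2: "4 \<le> n \<Longrightarrow> n * n \<le> (2::nat) ^ n"
proof (induction n rule: nat_induct_at_least)
  case base
  then show ?case by simp
next
  case (Suc n)
  have "Suc n * Suc n = n * n + 2 * n + 1" by simp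
  also have "\<dots> \<le> n * n + n * n" using Suc.hyps mult_le_mono1[of 4 n n] by linarith
  also have "\<dots> \<le> 2 ^ Suc n" using Suc.IH by simp
  finally show ?case .
qed

lemma pow2_time_le: "4 \<le> n \<Longrightarrow> pow2_time n \<le> 30 * 2 ^ n"
proof -
  assume n: "4 \<le> n"
  have "round_cost n n \<le> 3 * n + 3 * (n * n) + 8 * 2 ^ n"
    unfolding round_cost_def by (simp add: algebra_simps)
  moreover have "n \<le> n * n" "1 \<le> n * n" using n by simp_all
  ultimately show ?thesis using square_le_pow2[OF n] unfolding pow2_time_def by linarith
qed

theorem corollary2:
  shows "\<exists>M :: ab oia. wf_oia M
     \<and> recognizes M {replicate n La @ replicate (2 ^ n) Lb | n. True}
     \<and> (\<exists>(c::nat) n0. \<forall>n \<ge> n0. \<forall>m. runs_within M (replicate n La @ replicate m Lb) (c * 2 ^ n))"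
proof (intro exI conjI)
  show "wf_oia pow2_oia" by (rule wf_pow2_oia)
  show "recognizes pow2_oia {replicate n La @ replicate (2 ^ n) Lb | n. True}"
  proof (rule recognizes_if_halts_within)
    fix w :: "ab list"
    obtain n k r where d: "w = replicate n La @ replicate k Lb @ r" "r = [] \<or> (\<exists>r'. r = La # r')" "k = 0 \<longrightarrow> r = []"
      using ab_decomposition by blast
    show "\<exists>T. halts_within pow2_oia w (init pow2_oia w) (w \<in> {replicate n La @ replicate (2 ^ n) Lb | n. True}) T"
      using pow2_oia_halts[OF d] unfolding pow2_language_iff[OF d] by blast
  qed
  show "\<forall>n \<ge> 4. \<forall>m. runs_within pow2_oia (replicate n La @ replicate m Lb) (30 * 2 ^ n)"
  proof (intro allI impI)
    fix n m :: nat
    assume "4 \<le> n"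
    have "halts_within pow2_oia (replicate n La @ replicate m Lb) (init pow2_oia (replicate n La @ replicate m Lb))
        (m = 2 ^ n) (pow2_time n)"
      using pow2_oia_halts[of _ n m "[]"] by simp
    then show "runs_within pow2_oia (replicate n La @ replicate m Lb) (30 * 2 ^ n)"
      using pow2_time_le[OF \<open>4 \<le> n\<close>] by (intro halts_within_init_runs_within) (rule halts_within_mono)
  qed
qed

end
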